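(* Let $P$ be any poset on $\{1,2,\ldots,n\}$. Every weak $P$-partition $f$ has a unique expression as (i) $f=\sum_{k=1}^{\max(f)}\chi_{I_k}$ for a multiset $I_1\supseteq I_2\supseteq\cdots\supseteq I_{\max(f)}$ of nested nonempty order ideals of $P$; and also a unique expression as (ii) $f=\sum_{i=1}^{\nu(f)}\chi_{J_i}$ for a multiset $\{J_1,\ldots,J_{\nu(f)}\}$ of nonempty connected order ideals of $P$ which pairwise intersect trivially.
   Context: All posets are finite. A weak $P$-partition is a map $f:\{1,\ldots,n\}\to\mathbb{N}$ with $f(i)\ge f(j)$ whenever $i<_Pj$; $\max(f)$ is its maximum value. For $A\subseteq\{1,\ldots,n\}$, $\chi_A\in\{0,1\}^n$ is its indicator vector. An order ideal is a downward-closed subset of $P$; a connected order ideal is a nonempty order ideal whose induced Hasse diagram is connected. Two connected order ideals intersect trivially if they are disjoint or one contains the other. $\nu(f)$ denotes the number of terms (with multiplicity) in the expression of part (ii). *)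

theory Defs
  imports Main "HOL-Library.Multiset"
begin

definition poset_on :: "nat \<Rightarrow> (nat \<Rightarrow> nat \<Rightarrow> bool) \<Rightarrow> bool" where
  "poset_on n le \<longleftrightarrow>
     (\<forall>x\<in>{1..n}. le x x) \<and>
     (\<forall>x\<in>{1..n}. \<forall>y\<in>{1..n}. le x y \<and> le y x \<longrightarrow> x = y) \<and>
     (\<forall>x\<in>{1..n}. \<forall>y\<in>{1..n}. \<forall>z\<in>{1..n}. le x y \<and> le y z \<longrightarrow> le x z)"

definition weak_P_partition :: "nat \<Rightarrow> (nat \<Rightarrow> nat \<Rightarrow> bool) \<Rightarrow> (nat \<Rightarrow> nat) \<Rightarrow> bool" where
  "weak_P_partition n le f \<longleftrightarrow>
     (\<forall>i\<in>{1..n}. \<forall>j\<in>{1..n}. le i j \<and> i \<noteq> j \<longrightarrow> f j \<le> f i)"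

text \<open>max(f), with the convention max = 0 on the empty ground set.\<close>
definition pmax :: "nat \<Rightarrow> (nat \<Rightarrow> nat) \<Rightarrow> nat" where
  "pmax n f = Max (insert 0 (f ` {1..n}))"

definition order_ideal :: "nat \<Rightarrow> (nat \<Rightarrow> nat \<Rightarrow> bool) \<Rightarrow> nat set \<Rightarrow> bool" where
  "order_ideal n le I \<longleftrightarrow> I \<subseteq> {1..n} \<and> (\<forall>x\<in>I. \<forall>y\<in>{1..n}. le y x \<longrightarrow> y \<in> I)"

definition covers :: "nat \<Rightarrow> (nat \<Rightarrow> nat \<Rightarrow> bool) \<Rightarrow> nat \<Rightarrow> nat \<Rightarrow> bool" where
  "covers n le x y \<longleftrightarrow> x \<in> {1..n} \<and> y \<in> {1..n} \<and> le x y \<and> x \<noteq> y \<and>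
     \<not> (\<exists>z\<in>{1..n}. le x z \<and> le z y \<and> z \<noteq> x \<and> z \<noteq> y)"

definition connected_order_ideal :: "nat \<Rightarrow> (nat \<Rightarrow> nat \<Rightarrow> bool) \<Rightarrow> nat set \<Rightarrow> bool" where
  "connected_order_ideal n le I \<longleftrightarrow> order_ideal n le I \<and> I \<noteq> {} \<and>
     (\<forall>x\<in>I. \<forall>y\<in>I. (\<lambda>a b. a \<in> I \<and> b \<in> I \<and> (covers n le a b \<or> covers n le b a))\<^sup>*\<^sup>* x y)"

text \<open>Value at x of the sum of indicator vectors of the sets in a multiset.\<close>
definition chi_sum :: "nat set multiset \<Rightarrow> nat \<Rightarrow> nat" where
  "chi_sum M x = size (filter_mset (\<lambda>I. x \<in> I) M)"

end

theory Submission
  imports Defs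
begin

text \<open>The level sets \<open>{x. k \<le> f x}\<close>, \<open>1 \<le> k \<le> max f\<close>, are nested nonempty order ideals whose
  indicators add up to \<open>f\<close>; splitting each of them into its connected components of the Hasse
  diagram gives decomposition (ii). For uniqueness, \<open>f\<close> determines the maximal members of any
  admissible family: for a chain it is the support of \<open>f\<close>, and for a laminar family of connected
  ideals it is forced because a connected ideal covered by pairwise disjoint order ideals lies in
  one of them. Removing the maximal members leaves an admissible family for a smaller function,
  so induction on the number of members finishes the proof.\<close>

lemma chi_sum_add: "chi_sum (A + B) x = chi_sum A x + chi_sum B x"
  by (simp add: chi_sum_def)

lemma chi_sum_sum: "finite K \<Longrightarrow> chi_sum (\<Sum>k\<in>K. F k) x = (\<Sum>k\<in>K. chi_sum (F k) x)"
  by (induction K rule: finite_induct) (simp_all add: chi_sum_def)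

lemma chi_sum_single: "chi_sum {#A#} x = (if x \<in> A then 1 else 0)"
  by (simp add: chi_sum_def)

lemma chi_sum_diff:
  assumes "N \<subseteq># M"
  shows "chi_sum (M - N) x = chi_sum M x - chi_sum N x"
proof -
  have "chi_sum M x = chi_sum (M - N) x + chi_sum N x"
    using assms chi_sum_add[of "M - N" N x] by simp
  then show ?thesis by simp
qed

lemma chi_sum_mset_set: "finite X \<Longrightarrow> chi_sum (mset_set X) x = card {I \<in> X. x \<in> I}"
  by (simp add: chi_sum_def filter_mset_mset_set)

lemma chi_sum_pos_iff: "0 < chi_sum M x \<longleftrightarrow> (\<exists>J\<in>#M. x \<in> J)"
  by (auto simp: chi_sum_def nonempty_has_size[symmetric])

lemma Union_set_mset_eq_support: "\<Union>(set_mset M) = {x. 0 < chi_sum M x}"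
  by (auto simp: chi_sum_pos_iff)

lemma chi_sum_eqI:
  assumes "\<forall>J\<in>#M. J \<subseteq> A" and "\<forall>J\<in>#N. J \<subseteq> A" and "\<forall>x\<in>A. chi_sum M x = chi_sum N x"
  shows "chi_sum M = chi_sum N"
proof
  fix x
  show "chi_sum M x = chi_sum N x"
  proof (cases "x \<in> A")
    case False
    then have "\<not> 0 < chi_sum M x" "\<not> 0 < chi_sum N x"
      using assms(1,2) by (auto simp: chi_sum_pos_iff)
    then show ?thesis by simp
  qed (use assms(3) in simp)
qed

section \<open>Maximal members and the peeling argument\<close>

definition maximal_members :: "'a set multiset \<Rightarrow> 'a set set" where
  "maximal_members M = {I \<in> set_mset M. \<forall>J\<in>#M. I \<subseteq> J \<longrightarrow> I = J}"

lemma finite_maximal_members: "finite (maximal_members M)"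
  unfolding maximal_members_def by simp

lemma mset_set_maximal_members_subseteq: "mset_set (maximal_members M) \<subseteq># M"
proof -
  have "mset_set (maximal_members M) \<subseteq># mset_set (set_mset M)"
    by (simp add: msubset_mset_set_iff finite_maximal_members) (auto simp: maximal_members_def)
  then show ?thesis
    using mset_set_set_mset_msubset by (rule subset_mset.order_trans)
qed

lemma maximal_memberD:
  assumes "A \<in> maximal_members M"
  shows "A \<in># M" and "B \<in># M \<Longrightarrow> A \<subseteq> B \<Longrightarrow> B = A"
  using assms unfolding maximal_members_def by auto

lemma ex_maximal_member_superset: "I \<in># M \<Longrightarrow> \<exists>J\<in>maximal_members M. I \<subseteq> J"
  using finite_has_maximal2[of "set_mset M" I] unfolding maximal_members_def by auto

lemma maximal_members_empty_iff: "maximal_members M = {} \<longleftrightarrow> M = {#}"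
proof (cases "M = {#}")
  case False
  then obtain I where "I \<in># M"
    by (meson multiset_nonemptyE)
  then show ?thesis
    using False ex_maximal_member_superset by blast
qed (simp add: maximal_members_def)

lemma Union_maximal_members: "\<Union>(maximal_members M) = \<Union>(set_mset M)"
proof
  show "\<Union>(maximal_members M) \<subseteq> \<Union>(set_mset M)"
    using maximal_memberD(1) by blast
  show "\<Union>(set_mset M) \<subseteq> \<Union>(maximal_members M)"
    using ex_maximal_member_superset by blast
qed

lemma eq_by_maximal_members:
  assumes closed: "\<And>M N. C M \<Longrightarrow> N \<subseteq># M \<Longrightarrow> C N"
    and maximal: "\<And>M N. C M \<Longrightarrow> C N \<Longrightarrow> chi_sum M = chi_sum N \<Longrightarrow>
                    maximal_members M = maximal_members N"
    and "C M" and "C N" and "chi_sum M = chi_sum N"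
  shows "M = N"
  using assms(3-5)
proof (induction "size M" arbitrary: M N rule: less_induct)
  case less
  let ?X = "mset_set (maximal_members M)"
  have same_max: "maximal_members N = maximal_members M"
    using maximal[OF less.prems] by simp
  show ?case
  proof (cases "M = {#}")
    case True
    then show ?thesis
      using same_max maximal_members_empty_iff[of M] maximal_members_empty_iff[of N] by simp
  next
    case False
    have sub: "?X \<subseteq># M" "?X \<subseteq># N"
      using mset_set_maximal_members_subseteq[of M] mset_set_maximal_members_subseteq[of N] same_max
      by simp_all
    have "?X \<noteq> {#}"
      using False by (simp add: mset_set_empty_iff finite_maximal_members maximal_members_empty_iff)
    then have smaller: "size (M - ?X) < size M"
      using size_Diff_submset[OF sub(1)] size_mset_mono[OF sub(1)]
      by (simp add: nonempty_has_size)
    have "chi_sum (M - ?X) = chi_sum (N - ?X)"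
    proof
      fix x
      show "chi_sum (M - ?X) x = chi_sum (N - ?X) x"
        using less.prems(3) by (simp add: chi_sum_diff[OF sub(1)] chi_sum_diff[OF sub(2)])
    qed
    then have "M - ?X = N - ?X"
      by (rule less.hyps[OF smaller closed[OF less.prems(1)] closed[OF less.prems(2)], rotated 2])
        simp_all
    moreover have "M = (M - ?X) + ?X" "N = (N - ?X) + ?X"
      using sub by simp_all
    ultimately show ?thesis
      by simp
  qed
qed

section \<open>Chains\<close>

lemma maximal_members_chain:
  assumes "chain\<^sub>\<subseteq> (set_mset M)" and "M \<noteq> {#}"
  shows "maximal_members M = {\<Union>(set_mset M)}"
proof -
  obtain A where A: "A \<in> maximal_members M"
    using assms(2) maximal_members_empty_iff by blast
  have "B = A" if B: "B \<in> maximal_members M" for B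
  proof -
    have "A \<subseteq> B \<or> B \<subseteq> A"
      using assms(1) maximal_memberD(1)[OF A] maximal_memberD(1)[OF B]
      unfolding chain_subset_def by blast
    then show ?thesis
      using maximal_memberD(2)[OF A] maximal_memberD(2)[OF B] maximal_memberD(1)[OF A]
        maximal_memberD(1)[OF B] by blast
  qed
  then have "maximal_members M = {A}"
    using A by blast
  then show ?thesis
    using Union_maximal_members[of M] by simp
qed

lemma chain_subset_image_antimono:
  fixes S :: "'i::linorder \<Rightarrow> 'a set"
  assumes "antimono S"
  shows "chain\<^sub>\<subseteq> (S ` K)"
  unfolding chain_subset_def
proof (intro ballI)
  fix A B
  assume "A \<in> S ` K" "B \<in> S ` K"
  then obtain k l where "A = S k" "B = S l"
    by blast
  then show "A \<subseteq> B \<or> B \<subseteq> A"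
    using antimonoD[OF assms, of k l] antimonoD[OF assms, of l k] le_cases[of k l] by auto
qed

lemma chain_eq_if_chi_sum_eq:
  assumes "\<forall>I\<in>#M. I \<noteq> {}" "chain\<^sub>\<subseteq> (set_mset M)"
    and "\<forall>I\<in>#N. I \<noteq> {}" "chain\<^sub>\<subseteq> (set_mset N)"
    and "chi_sum M = chi_sum N"
  shows "M = N"
proof (rule eq_by_maximal_members[where C = "\<lambda>M. (\<forall>I\<in>#M. I \<noteq> {}) \<and> chain\<^sub>\<subseteq> (set_mset M)"])
  fix K K' :: "nat set multiset"
  show "(\<forall>I\<in>#K'. I \<noteq> {}) \<and> chain\<^sub>\<subseteq> (set_mset K')"
    if "(\<forall>I\<in>#K. I \<noteq> {}) \<and> chain\<^sub>\<subseteq> (set_mset K)" "K' \<subseteq># K"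
    using that set_mset_mono[OF that(2)] unfolding chain_subset_def by blast
  have empty_iff: "L = {#} \<longleftrightarrow> \<Union>(set_mset L) = {}"
    if "\<forall>I\<in>#L. I \<noteq> {}" for L :: "nat set multiset"
  proof (cases "L = {#}")
    case False
    then obtain I where "I \<in># L"
      by (meson multiset_nonemptyE)
    with that have "\<Union>(set_mset L) \<noteq> {}"
      by blast
    with False show ?thesis
      by simp
  qed simp
  show "maximal_members K = maximal_members K'"
    if K: "(\<forall>I\<in>#K. I \<noteq> {}) \<and> chain\<^sub>\<subseteq> (set_mset K)"
      and K': "(\<forall>I\<in>#K'. I \<noteq> {}) \<and> chain\<^sub>\<subseteq> (set_mset K')"
      and eq: "chi_sum K = chi_sum K'"
  proof -
    have union: "\<Union>(set_mset K) = \<Union>(set_mset K')"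
      unfolding Union_set_mset_eq_support eq ..
    have empty: "K = {#} \<longleftrightarrow> K' = {#}"
      unfolding empty_iff[OF conjunct1[OF K]] empty_iff[OF conjunct1[OF K']] union ..
    show ?thesis
    proof (cases "K = {#}")
      case False
      with empty have "K' \<noteq> {#}"
        by simp
      with False show ?thesis
        using maximal_members_chain[OF conjunct2[OF K]] maximal_members_chain[OF conjunct2[OF K']]
          union by simp
    qed (use empty in simp)
  qed
qed (use assms in auto)

section \<open>Laminar families of connected order ideals\<close>

definition laminar :: "'a set multiset \<Rightarrow> bool" where
  "laminar M \<longleftrightarrow> (\<forall>I\<in>#M. \<forall>J\<in>#M. I \<inter> J = {} \<or> I \<subseteq> J \<or> J \<subseteq> I)"

lemma laminar_subset_mset:
  assumes "laminar M" and "N \<subseteq># M"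
  shows "laminar N"
  using assms(1) mset_subset_eqD[OF assms(2)] unfolding laminar_def by blast

lemma pairwise_disjnt_maximal_members:
  assumes "laminar M"
  shows "pairwise disjnt (maximal_members M)"
proof (rule pairwiseI)
  fix A B
  assume A: "A \<in> maximal_members M" and B: "B \<in> maximal_members M" and "A \<noteq> B"
  have "A \<inter> B = {} \<or> A \<subseteq> B \<or> B \<subseteq> A"
    using assms maximal_memberD(1)[OF A] maximal_memberD(1)[OF B] unfolding laminar_def by blast
  moreover have "\<not> A \<subseteq> B"
    using maximal_memberD(2)[OF A maximal_memberD(1)[OF B]] \<open>A \<noteq> B\<close> by blast
  moreover have "\<not> B \<subseteq> A"
    using maximal_memberD(2)[OF B maximal_memberD(1)[OF A]] \<open>A \<noteq> B\<close> by blast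
  ultimately show "disjnt A B"
    unfolding disjnt_def by blast
qed

definition restrict_rel :: "('a \<Rightarrow> 'a \<Rightarrow> bool) \<Rightarrow> 'a set \<Rightarrow> 'a \<Rightarrow> 'a \<Rightarrow> bool" where
  "restrict_rel R S a b \<longleftrightarrow> a \<in> S \<and> b \<in> S \<and> R a b"

definition hasse_adjacent :: "nat \<Rightarrow> (nat \<Rightarrow> nat \<Rightarrow> bool) \<Rightarrow> nat \<Rightarrow> nat \<Rightarrow> bool" where
  "hasse_adjacent n le a b \<longleftrightarrow> covers n le a b \<or> covers n le b a"

lemma connected_order_ideal_iff:
  "connected_order_ideal n le I \<longleftrightarrow> order_ideal n le I \<and> I \<noteq> {} \<and>
     (\<forall>x\<in>I. \<forall>y\<in>I. (restrict_rel (hasse_adjacent n le) I)\<^sup>*\<^sup>* x y)"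
proof -
  have "restrict_rel (hasse_adjacent n le) I =
        (\<lambda>a b. a \<in> I \<and> b \<in> I \<and> (covers n le a b \<or> covers n le b a))"
    by (simp add: fun_eq_iff restrict_rel_def hasse_adjacent_def)
  then show ?thesis
    unfolding connected_order_ideal_def by simp
qed

lemma connected_order_ideal_subset_block:
  assumes A: "connected_order_ideal n le A"
    and ideals: "\<forall>B\<in>X. order_ideal n le B" and disj: "pairwise disjnt X"
    and cover: "A \<subseteq> \<Union>X" and B: "B \<in> X" and x: "x \<in> A" "x \<in> B"
  shows "A \<subseteq> B"
proof
  fix y
  assume "y \<in> A"
  then have "(restrict_rel (hasse_adjacent n le) A)\<^sup>*\<^sup>* x y"
    using A x unfolding connected_order_ideal_iff by blast
  then show "y \<in> B"
  proof (induction rule: rtranclp_induct)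
    case base
    then show ?case using x by simp
  next
    case (step a b)
    then have a: "a \<in> B" and b: "b \<in> A" and ab: "hasse_adjacent n le a b"
      by (auto simp: restrict_rel_def)
    obtain Y where Y: "Y \<in> X" "b \<in> Y"
      using cover b by blast
    from ab show ?case
      unfolding hasse_adjacent_def
    proof
      assume "covers n le a b"
      then have "a \<in> Y"
        using ideals Y unfolding order_ideal_def covers_def by blast
      then have "Y = B"
        using disj Y(1) B a unfolding pairwise_def disjnt_def by blast
      then show ?thesis using Y by simp
    next
      assume "covers n le b a"
      then show ?thesis
        using ideals B a unfolding order_ideal_def covers_def by blast
    qed
  qed
qed

lemma maximal_members_laminar_connected_subset:
  assumes M: "\<forall>J\<in>#M. connected_order_ideal n le J" "laminar M"
    and N: "\<forall>J\<in>#N. connected_order_ideal n le J" "laminar N"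
    and eq: "chi_sum M = chi_sum N"
  shows "maximal_members M \<subseteq> maximal_members N"
proof
  fix A
  assume A: "A \<in> maximal_members M"
  have ideals: "\<forall>B\<in>maximal_members K. order_ideal n le B"
    if "\<forall>J\<in>#K. connected_order_ideal n le J" for K
    using that unfolding maximal_members_def connected_order_ideal_def by auto
  have union: "\<Union>(maximal_members M) = \<Union>(maximal_members N)"
    using eq by (simp add: Union_maximal_members Union_set_mset_eq_support)
  have cA: "connected_order_ideal n le A"
    using A M(1) unfolding maximal_members_def by auto
  then obtain x where x: "x \<in> A"
    unfolding connected_order_ideal_def by blast
  then obtain B where B: "B \<in> maximal_members N" "x \<in> B"
    using union A by blast
  have cB: "connected_order_ideal n le B"
    using B N(1) unfolding maximal_members_def by auto
  obtain A' where A': "A' \<in> maximal_members M" "x \<in> A'"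
    using union B by blast
  have "A \<subseteq> B"
    using connected_order_ideal_subset_block[OF cA ideals[OF N(1)]
        pairwise_disjnt_maximal_members[OF N(2)] _ B(1) x B(2)] union A by blast
  moreover have "B \<subseteq> A'"
    using connected_order_ideal_subset_block[OF cB ideals[OF M(1)]
        pairwise_disjnt_maximal_members[OF M(2)] _ A'(1) B(2) A'(2)] union B by blast
  moreover have "A = A'"
    using pairwise_disjnt_maximal_members[OF M(2)] A A' x
    unfolding pairwise_def disjnt_def by blast
  ultimately show "A \<in> maximal_members N"
    using B(1) by simp
qed

lemma laminar_connected_eq_if_chi_sum_eq:
  assumes "\<forall>J\<in>#M. connected_order_ideal n le J" "laminar M"
    and "\<forall>J\<in>#N. connected_order_ideal n le J" "laminar N"
    and "chi_sum M = chi_sum N"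
  shows "M = N"
proof (rule eq_by_maximal_members
    [where C = "\<lambda>M. (\<forall>J\<in>#M. connected_order_ideal n le J) \<and> laminar M"])
  fix K K' :: "nat set multiset"
  show "(\<forall>J\<in>#K'. connected_order_ideal n le J) \<and> laminar K'"
    if "(\<forall>J\<in>#K. connected_order_ideal n le J) \<and> laminar K" "K' \<subseteq># K"
    using that(1) mset_subset_eqD[OF that(2)] laminar_subset_mset[OF _ that(2)] by blast
  show "maximal_members K = maximal_members K'"
    if K: "(\<forall>J\<in>#K. connected_order_ideal n le J) \<and> laminar K"
      and K': "(\<forall>J\<in>#K'. connected_order_ideal n le J) \<and> laminar K'"
      and eq: "chi_sum K = chi_sum K'"
  proof (rule subset_antisym)
    show "maximal_members K \<subseteq> maximal_members K'"
      by (rule maximal_members_laminar_connected_subset[of K n le K']) (use K K' eq in simp_all)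
    show "maximal_members K' \<subseteq> maximal_members K"
      by (rule maximal_members_laminar_connected_subset[of K' n le K]) (use K K' eq in simp_all)
  qed
qed (use assms in auto)

section \<open>Components of a set under a symmetric relation\<close>

definition component :: "('a \<Rightarrow> 'a \<Rightarrow> bool) \<Rightarrow> 'a set \<Rightarrow> 'a \<Rightarrow> 'a set" where
  "component R S x = {y \<in> S. (restrict_rel R S)\<^sup>*\<^sup>* x y}"

lemma rtranclp_restrict_rel_sym:
  "symp R \<Longrightarrow> (restrict_rel R S)\<^sup>*\<^sup>* a b \<Longrightarrow> (restrict_rel R S)\<^sup>*\<^sup>* b a"
  by (metis (no_types, lifting) restrict_rel_def sympD sympI symp_rtranclp)

lemma mem_component_self: "x \<in> S \<Longrightarrow> x \<in> component R S x"
  unfolding component_def by simp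

lemma component_eq:
  assumes "symp R" and "v \<in> component R S w"
  shows "component R S v = component R S w"
  using assms rtranclp_restrict_rel_sym[OF assms(1)] unfolding component_def
  by (auto intro: rtranclp_trans)

lemma component_mono: "S' \<subseteq> S \<Longrightarrow> component R S' x \<subseteq> component R S x"
proof -
  assume "S' \<subseteq> S"
  then have "restrict_rel R S' \<le> restrict_rel R S"
    by (auto simp: restrict_rel_def)
  then have "(restrict_rel R S')\<^sup>*\<^sup>* \<le> (restrict_rel R S)\<^sup>*\<^sup>*"
    by (rule rtranclp_mono)
  with \<open>S' \<subseteq> S\<close> show ?thesis
    unfolding component_def by blast
qed

lemma components_nested_laminar:
  assumes "symp R" and "S' \<subseteq> S"
    and "I \<in> component R S ` S" and "J \<in> component R S' ` S'"
  shows "I \<inter> J = {} \<or> J \<subseteq> I"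
proof (cases "I \<inter> J = {}")
  case False
  then obtain u where u: "u \<in> I" "u \<in> J" by blast
  obtain w where w: "I = component R S w" using assms(3) by blast
  obtain v where v: "J = component R S' v" using assms(4) by blast
  have "J = component R S' u" using component_eq[OF assms(1)] u v by metis
  also have "\<dots> \<subseteq> component R S u" using component_mono[OF assms(2)] .
  also have "\<dots> = I" using component_eq[OF assms(1)] u w by metis
  finally show ?thesis by simp
qed simp

lemma laminar_sum_components:
  fixes S :: "'i::linorder \<Rightarrow> 'a set"
  assumes "symp R" and "antimono S" and "\<And>k. finite (S k)" and "finite K"
  shows "laminar (\<Sum>k\<in>K. mset_set (component R (S k) ` S k))"
  unfolding laminar_def
proof (intro ballI)
  fix I J
  assume "I \<in># (\<Sum>k\<in>K. mset_set (component R (S k) ` S k))"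
    and "J \<in># (\<Sum>k\<in>K. mset_set (component R (S k) ` S k))"
  then obtain k l where I: "I \<in> component R (S k) ` S k" and J: "J \<in> component R (S l) ` S l"
    using assms(3,4) by (auto simp: set_mset_sum)
  show "I \<inter> J = {} \<or> I \<subseteq> J \<or> J \<subseteq> I"
  proof (cases "k \<le> l")
    case True
    then show ?thesis
      using components_nested_laminar[OF assms(1) antimonoD[OF assms(2) True] I J] by blast
  next
    case False
    then have "l \<le> k"
      by simp
    show ?thesis
      using components_nested_laminar[OF assms(1) antimonoD[OF assms(2) \<open>l \<le> k\<close>] J I] by blast
  qed
qed

lemma chi_sum_components:
  assumes "symp R" and "finite S"
  shows "chi_sum (mset_set (component R S ` S)) x = (if x \<in> S then 1 else 0)"
proof -
  have "{I \<in> component R S ` S. x \<in> I} = (if x \<in> S then {component R S x} else {})"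
    using component_eq[OF assms(1)] mem_component_self[of x S R]
    by (auto simp: component_def)
  then show ?thesis
    using assms(2) by (simp add: chi_sum_mset_set)
qed

lemma poset_onD:
  assumes "poset_on n le"
  shows poset_on_refl: "x \<in> {1..n} \<Longrightarrow> le x x"
    and poset_on_antisym: "x \<in> {1..n} \<Longrightarrow> y \<in> {1..n} \<Longrightarrow> le x y \<Longrightarrow> le y x \<Longrightarrow> x = y"
    and poset_on_trans:
      "x \<in> {1..n} \<Longrightarrow> y \<in> {1..n} \<Longrightarrow> z \<in> {1..n} \<Longrightarrow> le x y \<Longrightarrow> le y z \<Longrightarrow> le x z"
  using assms unfolding poset_on_def by blast+

definition interval :: "nat \<Rightarrow> (nat \<Rightarrow> nat \<Rightarrow> bool) \<Rightarrow> nat \<Rightarrow> nat \<Rightarrow> nat set" where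
  "interval n le a b = {w \<in> {1..n}. le a w \<and> le w b}"

lemma card_interval_less_upper:
  assumes P: "poset_on n le" and y: "y \<in> {1..n}" and z: "z \<in> {1..n}" and x: "x \<in> {1..n}"
    and "le y z" "le z x" "z \<noteq> x"
  shows "card (interval n le y z) < card (interval n le y x)"
proof (rule psubset_card_mono)
  have "interval n le y z \<subseteq> interval n le y x"
    using poset_on_trans[OF P _ z x] assms(6) unfolding interval_def by blast
  moreover have "x \<notin> interval n le y z"
    using poset_on_antisym[OF P z x] assms(6,7) unfolding interval_def by blast
  moreover have "x \<in> interval n le y x"
    using poset_on_trans[OF P y z x] poset_on_refl[OF P x] assms(5,6) x unfolding interval_def by blast
  ultimately show "interval n le y z \<subset> interval n le y x" by blast
qed (simp add: interval_def)

lemma card_interval_less_lower: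
  assumes P: "poset_on n le" and y: "y \<in> {1..n}" and z: "z \<in> {1..n}" and x: "x \<in> {1..n}"
    and "le y z" "le z x" "z \<noteq> y"
  shows "card (interval n le z x) < card (interval n le y x)"
proof (rule psubset_card_mono)
  have "interval n le z x \<subseteq> interval n le y x"
    using poset_on_trans[OF P y z] assms(5) unfolding interval_def by blast
  moreover have "y \<notin> interval n le z x"
    using poset_on_antisym[OF P y z] assms(5,7) unfolding interval_def by blast
  moreover have "y \<in> interval n le y x"
    using poset_on_trans[OF P y z x] poset_on_refl[OF P y] assms(5,6) y unfolding interval_def by blast
  ultimately show "interval n le z x \<subset> interval n le y x" by blast
qed (simp add: interval_def)

lemma hasse_path_below:
  assumes P: "poset_on n le" and I: "order_ideal n le I"
    and "x \<in> I" and "y \<in> {1..n}" and "le y x"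
  shows "(restrict_rel (hasse_adjacent n le) I)\<^sup>*\<^sup>* y x"
  using assms(3-5)
proof (induction "card (interval n le y x)" arbitrary: x y rule: less_induct)
  case less
  have x: "x \<in> {1..n}" using less.prems(1) I unfolding order_ideal_def by blast
  have y: "y \<in> I" using less.prems I unfolding order_ideal_def by blast
  show ?case
  proof (cases "y = x \<or> covers n le y x")
    case True
    then show ?thesis
      using y less.prems(1) by (auto simp: restrict_rel_def hasse_adjacent_def)
  next
    case False
    then obtain z where z: "z \<in> {1..n}" "le y z" "le z x" "z \<noteq> y" "z \<noteq> x"
      using x less.prems(2,3) unfolding covers_def by blast
    have "z \<in> I" using z less.prems(1) I unfolding order_ideal_def by blast
    have "(restrict_rel (hasse_adjacent n le) I)\<^sup>*\<^sup>* y z"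
      by (rule less.hyps[OF card_interval_less_upper[OF P less.prems(2) z(1) x z(2,3,5)]
            \<open>z \<in> I\<close> less.prems(2) z(2)])
    moreover have "(restrict_rel (hasse_adjacent n le) I)\<^sup>*\<^sup>* z x"
      by (rule less.hyps[OF card_interval_less_lower[OF P less.prems(2) z(1) x z(2,3,4)]
            less.prems(1) z(1,3)])
    ultimately show ?thesis by simp
  qed
qed

lemma symp_hasse_adjacent: "symp (hasse_adjacent n le)"
  unfolding hasse_adjacent_def by (rule sympI) blast

lemma component_connected_order_ideal:
  assumes P: "poset_on n le" and I: "order_ideal n le I" and "x \<in> I"
  shows "connected_order_ideal n le (component (hasse_adjacent n le) I x)"
proof -
  let ?R = "restrict_rel (hasse_adjacent n le)"
  let ?C = "component (hasse_adjacent n le) I x"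
  note sym = rtranclp_restrict_rel_sym[OF symp_hasse_adjacent]
  have "order_ideal n le ?C"
    unfolding order_ideal_def
  proof (intro conjI ballI impI)
    show "?C \<subseteq> {1..n}"
      using I unfolding component_def order_ideal_def by blast
  next
    fix a b
    assume a: "a \<in> ?C" and b: "b \<in> {1..n}" "le b a"
    then have aI: "a \<in> I" and xa: "(?R I)\<^sup>*\<^sup>* x a"
      unfolding component_def by auto
    have "(?R I)\<^sup>*\<^sup>* x b"
      using xa sym[OF hasse_path_below[OF P I aI b]] by simp
    moreover have "b \<in> I"
      using I b aI unfolding order_ideal_def by blast
    ultimately show "b \<in> ?C"
      unfolding component_def by simp
  qed
  moreover have path_in_C: "(?R ?C)\<^sup>*\<^sup>* x y" if "y \<in> ?C" for y
  proof -
    have "(?R I)\<^sup>*\<^sup>* x y"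
      using that unfolding component_def by simp
    then show ?thesis
    proof (induction rule: rtranclp_induct)
      case (step a b)
      have "(?R I)\<^sup>*\<^sup>* x b"
        using step(1,2) by (rule rtranclp.rtrancl_into_rtrancl)
      with step(1,2) have "a \<in> ?C" and "b \<in> ?C"
        unfolding component_def by (auto simp: restrict_rel_def)
      then have "?R ?C a b"
        using step(2) by (simp add: restrict_rel_def)
      with step(3) show ?case by simp
    qed simp
  qed
  moreover have "(?R ?C)\<^sup>*\<^sup>* a b" if "a \<in> ?C" "b \<in> ?C" for a b
    using sym[OF path_in_C[OF that(1)]] path_in_C[OF that(2)] by simp
  ultimately show ?thesis
    using mem_component_self[OF assms(3)] unfolding connected_order_ideal_iff by blast
qed

section \<open>Level sets of a weak P-partition\<close>

definition level_set :: "nat \<Rightarrow> (nat \<Rightarrow> nat) \<Rightarrow> nat \<Rightarrow> nat set" where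
  "level_set n f k = {x \<in> {1..n}. k \<le> f x}"

lemma finite_level_set: "finite (level_set n f k)"
  unfolding level_set_def by simp

lemma order_ideal_level_set:
  assumes "weak_P_partition n le f"
  shows "order_ideal n le (level_set n f k)"
  unfolding order_ideal_def
proof (intro conjI ballI impI)
  show "level_set n f k \<subseteq> {1..n}"
    unfolding level_set_def by blast
next
  fix x y
  assume x: "x \<in> level_set n f k" and y: "y \<in> {1..n}" "le y x"
  then have "f x \<le> f y"
    using assms unfolding weak_P_partition_def level_set_def by (cases "y = x") auto
  with x y show "y \<in> level_set n f k"
    unfolding level_set_def by simp
qed

lemma antimono_level_set: "antimono (level_set n f)"
  by (rule antimonoI) (auto simp: level_set_def)

lemma level_set_nonempty:
  assumes "1 \<le> k" and "k \<le> pmax n f"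
  shows "level_set n f k \<noteq> {}"
proof -
  have "pmax n f \<in> insert 0 (f ` {1..n})"
    unfolding pmax_def by (rule Max_in) auto
  with assms obtain x where "x \<in> {1..n}" "f x = pmax n f"
    by auto
  with assms show ?thesis
    unfolding level_set_def by auto
qed

lemma sum_level_set_indicators:
  assumes "x \<in> {1..n}"
  shows "(\<Sum>k\<in>{1..pmax n f}. if x \<in> level_set n f k then 1 else 0) = f x"
proof -
  have "f x \<le> pmax n f"
    using assms unfolding pmax_def by simp
  then have "{k \<in> {1..pmax n f}. x \<in> level_set n f k} = {1..f x}"
    using assms unfolding level_set_def by auto
  then show ?thesis
    by (simp add: sum.If_cases Int_def)
qed

definition nested_ideal_decomposition ::
    "nat \<Rightarrow> (nat \<Rightarrow> nat \<Rightarrow> bool) \<Rightarrow> (nat \<Rightarrow> nat) \<Rightarrow> nat set multiset \<Rightarrow> bool" where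
  "nested_ideal_decomposition n le f M \<longleftrightarrow> size M = pmax n f \<and>
     (\<forall>I\<in>#M. order_ideal n le I \<and> I \<noteq> {}) \<and> chain\<^sub>\<subseteq> (set_mset M) \<and>
     (\<forall>x\<in>{1..n}. f x = chi_sum M x)"

definition connected_ideal_decomposition ::
    "nat \<Rightarrow> (nat \<Rightarrow> nat \<Rightarrow> bool) \<Rightarrow> (nat \<Rightarrow> nat) \<Rightarrow> nat set multiset \<Rightarrow> bool" where
  "connected_ideal_decomposition n le f M \<longleftrightarrow>
     (\<forall>J\<in>#M. connected_order_ideal n le J) \<and> laminar M \<and> (\<forall>x\<in>{1..n}. f x = chi_sum M x)"

lemma chi_sum_eq_of_ideal_representations:
  assumes "\<forall>I\<in>#M. order_ideal n le I" "\<forall>x\<in>{1..n}. f x = chi_sum M x"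
    and "\<forall>I\<in>#N. order_ideal n le I" "\<forall>x\<in>{1..n}. f x = chi_sum N x"
  shows "chi_sum M = chi_sum N"
  using assms by (intro chi_sum_eqI[where A = "{1..n}"]) (auto simp: order_ideal_def)

lemma ex1_nested_ideal_decomposition:
  assumes "weak_P_partition n le f"
  shows "\<exists>!M. nested_ideal_decomposition n le f M"
proof (rule ex_ex1I)
  define M where "M = (\<Sum>k\<in>{1..pmax n f}. {#level_set n f k#})"
  have members: "set_mset M = level_set n f ` {1..pmax n f}"
    unfolding M_def by (auto simp: set_mset_sum)
  have "size M = pmax n f"
    by (simp add: M_def)
  moreover have "\<forall>I\<in>#M. order_ideal n le I \<and> I \<noteq> {}"
    using order_ideal_level_set[OF assms] level_set_nonempty unfolding members by auto
  moreover have "chain\<^sub>\<subseteq> (set_mset M)"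
    unfolding members by (rule chain_subset_image_antimono[OF antimono_level_set])
  moreover have "\<forall>x\<in>{1..n}. f x = chi_sum M x"
    using sum_level_set_indicators by (simp add: M_def chi_sum_sum chi_sum_single)
  ultimately show "\<exists>M. nested_ideal_decomposition n le f M"
    unfolding nested_ideal_decomposition_def by blast
next
  fix M N
  assume M: "nested_ideal_decomposition n le f M" and N: "nested_ideal_decomposition n le f N"
  have "chi_sum M = chi_sum N"
    by (rule chi_sum_eq_of_ideal_representations[of M n le f N])
      (use M N in \<open>simp_all add: nested_ideal_decomposition_def\<close>)
  then show "M = N"
    by (rule chain_eq_if_chi_sum_eq[rotated 4])
      (use M N in \<open>simp_all add: nested_ideal_decomposition_def\<close>)
qed

lemma ex1_connected_ideal_decomposition:
  assumes "poset_on n le" and "weak_P_partition n le f"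
  shows "\<exists>!M. connected_ideal_decomposition n le f M"
proof (rule ex_ex1I)
  let ?components = "\<lambda>k. component (hasse_adjacent n le) (level_set n f k) ` level_set n f k"
  define M where "M = (\<Sum>k\<in>{1..pmax n f}. mset_set (?components k))"
  have members: "J \<in># M \<longleftrightarrow> (\<exists>k\<in>{1..pmax n f}. J \<in> ?components k)" for J
    unfolding M_def by (auto simp: set_mset_sum finite_level_set)
  have "connected_order_ideal n le J" if "J \<in># M" for J
    using that component_connected_order_ideal[OF assms(1) order_ideal_level_set[OF assms(2)]]
    unfolding members by blast
  moreover have "laminar M"
    unfolding M_def
    by (rule laminar_sum_components[OF symp_hasse_adjacent antimono_level_set finite_level_set])
      simp
  moreover have "f x = chi_sum M x" if "x \<in> {1..n}" for x
    using sum_level_set_indicators[OF that]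
    by (simp add: M_def chi_sum_sum chi_sum_components[OF symp_hasse_adjacent finite_level_set])
  ultimately show "\<exists>M. connected_ideal_decomposition n le f M"
    unfolding connected_ideal_decomposition_def by blast
next
  fix M N
  assume M: "connected_ideal_decomposition n le f M" and N: "connected_ideal_decomposition n le f N"
  have "chi_sum M = chi_sum N"
    by (rule chi_sum_eq_of_ideal_representations[of M n le f N])
      (use M N in \<open>auto simp: connected_ideal_decomposition_def connected_order_ideal_def\<close>)
  then show "M = N"
    by (rule laminar_connected_eq_if_chi_sum_eq[of M n le N, rotated 4])
      (use M N in \<open>simp_all add: connected_ideal_decomposition_def\<close>)
qed

theorem proposition2p5:
  fixes n :: nat and le :: "nat \<Rightarrow> nat \<Rightarrow> bool" and f :: "nat \<Rightarrow> nat"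
  assumes "poset_on n le" and "weak_P_partition n le f"
  shows "(\<exists>!M. size M = pmax n f \<and>
              (\<forall>I\<in>#M. order_ideal n le I \<and> I \<noteq> {}) \<and>
              (\<forall>I\<in>#M. \<forall>J\<in>#M. I \<subseteq> J \<or> J \<subseteq> I) \<and>
              (\<forall>x\<in>{1..n}. f x = chi_sum M x))
       \<and> (\<exists>!M. (\<forall>J\<in>#M. connected_order_ideal n le J) \<and>
              (\<forall>I\<in>#M. \<forall>J\<in>#M. I \<inter> J = {} \<or> I \<subseteq> J \<or> J \<subseteq> I) \<and>
              (\<forall>x\<in>{1..n}. f x = chi_sum M x))"
  using ex1_nested_ideal_decomposition[OF assms(2)] ex1_connected_ideal_decomposition[OF assms]
  unfolding nested_ideal_decomposition_def connected_ideal_decomposition_def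
    chain_subset_def laminar_def
  by (rule conjI)

end
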